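(* Let $a,b,c,q>0$, $0<p<1$, and consider $$\frac{dx}{dt}=x\left[\frac{(1-x)(x-p)}{1+qy}-ay\right],\qquad \frac{dy}{dt}=by\,(1-y-cx).$$ Define $A_1=ac^2q+1$, $A_2=-(2acq+ac+p+1)$, $A_3=a+aq+p$, $\Delta=A_2^2-4A_1A_3$. When $\Delta>0$ put $x_1=\frac{-A_2-\sqrt\Delta}{2A_1}$, $x_2=\frac{-A_2+\sqrt\Delta}{2A_1}$, $E_{1*}=(x_1,1-cx_1)$, $E_{2*}=(x_2,1-cx_2)$; when $\Delta=0$ put $x_3=-\frac{A_2}{2A_1}$ and $E_{3*}=(x_3,1-cx_3)$. Then the positive equilibria (equilibria with both coordinates positive) of the system are as follows. Case I: $\Delta>0$. (1) If $2A_1+A_2>0$: (a) if $0<c<1$, there are exactly two positive equilibria $E_{1*}$ and $E_{2*}$; (b) if $c=1$, there is exactly one positive equilibrium $E_{1*}$; (c) if $1<c\le \frac1q+1$ and $0<p<\frac1c$, there is exactly one positive equilibrium $E_{1*}$. (2) If $2A_1+A_2<0$, $1<c<\frac1q+1$ and $0<p<\frac1c$, there is exactly one positive equilibrium $E_{1*}$. (3) If $2A_1+A_2=0$, $c>1$ and $0<p<\frac1c$, there is exactly one positive equilibrium $E_{1*}$. Case II: if $\Delta=0$, $2A_1+A_2>0$ and $0<c<1$, there is exactly one positive equilibrium $E_{3*}$.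
   Context: The quadratic $A_1x^2+A_2x+A_3=0$ is obtained by eliminating $y=1-cx$ from the equations $(1-x)(x-p)/(1+qy)-ay=0$ and $1-y-cx=0$; its real roots give the $x$-coordinates of the interior equilibria. *)

theory Defs
  imports Complex_Main
begin

definition fx :: "real \<Rightarrow> real \<Rightarrow> real \<Rightarrow> real \<Rightarrow> real \<Rightarrow> real" where
  "fx a p q x y = x * ((1 - x) * (x - p) / (1 + q * y) - a * y)"

definition fy :: "real \<Rightarrow> real \<Rightarrow> real \<Rightarrow> real \<Rightarrow> real" where
  "fy b c x y = b * y * (1 - y - c * x)"

definition pos_equilibria :: "real \<Rightarrow> real \<Rightarrow> real \<Rightarrow> real \<Rightarrow> real \<Rightarrow> (real \<times> real) set" where
  "pos_equilibria a b c p q =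
     {(x, y). x > 0 \<and> y > 0 \<and> fx a p q x y = 0 \<and> fy b c x y = 0}"

definition A1 :: "real \<Rightarrow> real \<Rightarrow> real \<Rightarrow> real" where
  "A1 a c q = a * c^2 * q + 1"

definition A2 :: "real \<Rightarrow> real \<Rightarrow> real \<Rightarrow> real \<Rightarrow> real" where
  "A2 a c p q = - (2 * a * c * q + a * c + p + 1)"

definition A3 :: "real \<Rightarrow> real \<Rightarrow> real \<Rightarrow> real" where
  "A3 a p q = a + a * q + p"

definition Delta :: "real \<Rightarrow> real \<Rightarrow> real \<Rightarrow> real \<Rightarrow> real" where
  "Delta a c p q = (A2 a c p q)^2 - 4 * A1 a c q * A3 a p q"

definition x1 :: "real \<Rightarrow> real \<Rightarrow> real \<Rightarrow> real \<Rightarrow> real" where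
  "x1 a c p q = (- A2 a c p q - sqrt (Delta a c p q)) / (2 * A1 a c q)"

definition x2 :: "real \<Rightarrow> real \<Rightarrow> real \<Rightarrow> real \<Rightarrow> real" where
  "x2 a c p q = (- A2 a c p q + sqrt (Delta a c p q)) / (2 * A1 a c q)"

definition x3 :: "real \<Rightarrow> real \<Rightarrow> real \<Rightarrow> real \<Rightarrow> real" where
  "x3 a c p q = - A2 a c p q / (2 * A1 a c q)"

definition E1 :: "real \<Rightarrow> real \<Rightarrow> real \<Rightarrow> real \<Rightarrow> real \<times> real" where
  "E1 a c p q = (x1 a c p q, 1 - c * x1 a c p q)"

definition E2 :: "real \<Rightarrow> real \<Rightarrow> real \<Rightarrow> real \<Rightarrow> real \<times> real" where
  "E2 a c p q = (x2 a c p q, 1 - c * x2 a c p q)"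

definition E3 :: "real \<Rightarrow> real \<Rightarrow> real \<Rightarrow> real \<Rightarrow> real \<times> real" where
  "E3 a c p q = (x3 a c p q, 1 - c * x3 a c p q)"

end

theory Submission
  imports Defs
begin

text \<open>Eliminating \<open>y = 1 - c x\<close> turns the equilibrium conditions into the quadratic
  \<open>Q x = A1 x\<^sup>2 + A2 x + A3 = 0\<close> on \<open>0 < x < 1/c\<close>. Since \<open>A1 > 0\<close>, \<open>A2 < 0\<close>, \<open>A3 > 0\<close>, the smaller
  root \<open>x1\<close> is always positive, so everything hinges on where the roots lie relative to
  \<open>1/c\<close>. The key identity is \<open>Q (1/c) = (1/c - 1)(1/c - p)\<close>: for \<open>c > 1\<close> and \<open>p < 1/c\<close> it
  is negative, so \<open>1/c\<close> separates the roots; for \<open>c \<le> 1\<close> it is nonnegative, and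
  \<open>2 A1 + A2 > 0\<close> puts the vertex left of \<open>1 \<le> 1/c\<close>, so both roots lie in \<open>(0, 1/c]\<close>.\<close>

definition lower_root :: "real \<Rightarrow> real \<Rightarrow> real \<Rightarrow> real" where
  "lower_root A B C = (- B - sqrt (B\<^sup>2 - 4 * A * C)) / (2 * A)"

definition upper_root :: "real \<Rightarrow> real \<Rightarrow> real \<Rightarrow> real" where
  "upper_root A B C = (- B + sqrt (B\<^sup>2 - 4 * A * C)) / (2 * A)"

lemma lower_root_less_upper_root:
  assumes "A > 0" "B\<^sup>2 - 4 * A * C > 0"
  shows "lower_root A B C < upper_root A B C"
  using assms unfolding lower_root_def upper_root_def
  by (intro divide_strict_right_mono) auto

context
  fixes A B C :: real
  assumes A_pos: "A > 0" and discr_nonneg: "B\<^sup>2 - 4 * A * C \<ge> 0"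
begin

lemma quadratic_factor:
  "A * x\<^sup>2 + B * x + C = A * (x - lower_root A B C) * (x - upper_root A B C)"
proof -
  have "sqrt (B\<^sup>2 - 4 * A * C) ^ 2 = B\<^sup>2 - 4 * A * C"
    using discr_nonneg by simp
  then show ?thesis
    using A_pos unfolding lower_root_def upper_root_def
    by (simp add: field_simps power2_eq_square)
qed

lemma quadratic_eq_0_iff:
  "A * x\<^sup>2 + B * x + C = 0 \<longleftrightarrow> x = lower_root A B C \<or> x = upper_root A B C"
  using A_pos by (simp add: quadratic_factor)

lemma lower_root_le_upper_root: "lower_root A B C \<le> upper_root A B C"
  using A_pos discr_nonneg unfolding lower_root_def upper_root_def
  by (intro divide_right_mono) auto

lemma lower_root_plus_upper_root: "lower_root A B C + upper_root A B C = - B / A"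
  using A_pos unfolding lower_root_def upper_root_def by (simp add: field_simps)

lemma lower_root_pos:
  assumes "B < 0" "C > 0"
  shows "lower_root A B C > 0"
proof -
  have "sqrt (B\<^sup>2 - 4 * A * C) < sqrt (B\<^sup>2)"
    using A_pos assms by (simp only: real_sqrt_less_iff) simp
  then have "sqrt (B\<^sup>2 - 4 * A * C) < - B"
    using assms by simp
  then show ?thesis
    using A_pos unfolding lower_root_def by (simp add: field_simps)
qed

lemma roots_around_neg_value:
  assumes "A * t\<^sup>2 + B * t + C < 0"
  shows "lower_root A B C < t" "t < upper_root A B C"
proof -
  have "(t - lower_root A B C) * (t - upper_root A B C) < 0"
    using assms A_pos by (simp add: quadratic_factor mult.assoc mult_less_0_iff)
  then show "lower_root A B C < t" "t < upper_root A B C"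
    using lower_root_le_upper_root by (auto simp: mult_less_0_iff)
qed

lemma upper_root_le_right_of_vertex:
  assumes "A * t\<^sup>2 + B * t + C \<ge> 0" "- B / (2 * A) \<le> t"
  shows "upper_root A B C \<le> t"
proof (rule ccontr)
  assume "\<not> upper_root A B C \<le> t"
  moreover have "(t - lower_root A B C) * (t - upper_root A B C) \<ge> 0"
    using assms(1) A_pos by (simp add: quadratic_factor mult.assoc zero_le_mult_iff)
  ultimately have "t \<le> lower_root A B C"
    by (auto simp: zero_le_mult_iff)
  moreover have "lower_root A B C + upper_root A B C \<le> 2 * t"
    using assms(2) A_pos by (simp add: lower_root_plus_upper_root field_simps)
  ultimately show False
    using \<open>\<not> upper_root A B C \<le> t\<close> by linarith
qed

end

abbreviation equilibrium_quadratic :: "real \<Rightarrow> real \<Rightarrow> real \<Rightarrow> real \<Rightarrow> real \<Rightarrow> real" where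
  "equilibrium_quadratic a c p q x \<equiv> A1 a c q * x\<^sup>2 + A2 a c p q * x + A3 a p q"

lemma x1_eq_lower_root: "x1 a c p q = lower_root (A1 a c q) (A2 a c p q) (A3 a p q)"
  unfolding x1_def lower_root_def Delta_def ..

lemma x2_eq_upper_root: "x2 a c p q = upper_root (A1 a c q) (A2 a c p q) (A3 a p q)"
  unfolding x2_def upper_root_def Delta_def ..

lemma x3_eq_x1: "Delta a c p q = 0 \<Longrightarrow> x3 a c p q = x1 a c p q"
  unfolding x3_def x1_def by simp

lemma x2_eq_x1: "Delta a c p q = 0 \<Longrightarrow> x2 a c p q = x1 a c p q"
  unfolding x2_def x1_def by simp

lemma A1_pos: "a > 0 \<Longrightarrow> q > 0 \<Longrightarrow> A1 a c q > 0"
  unfolding A1_def by (simp add: add_nonneg_pos)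

lemma A2_neg: "a > 0 \<Longrightarrow> c > 0 \<Longrightarrow> q > 0 \<Longrightarrow> p > 0 \<Longrightarrow> A2 a c p q < 0"
  unfolding A2_def by (smt (verit) mult_pos_pos)

lemma A3_pos: "a > 0 \<Longrightarrow> q > 0 \<Longrightarrow> p > 0 \<Longrightarrow> A3 a p q > 0"
  unfolding A3_def by (simp add: add_pos_pos)

lemma equilibrium_quadratic_at_inverse_c:
  "c \<noteq> 0 \<Longrightarrow> equilibrium_quadratic a c p q (1 / c) = (1 / c - 1) * (1 / c - p)"
  unfolding A1_def A2_def A3_def by (simp add: field_simps power2_eq_square)

lemma equilibrium_iff:
  assumes "a > 0" "b > 0" "q > 0" "x > 0" "y > 0"
  shows "fx a p q x y = 0 \<and> fy b c x y = 0 \<longleftrightarrow>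
           y = 1 - c * x \<and> equilibrium_quadratic a c p q x = 0"
proof -
  have "1 + q * y > 0"
    using assms by (simp add: add_pos_pos)
  moreover have "fx a p q x y = 0 \<longleftrightarrow> (1 - x) * (x - p) / (1 + q * y) = a * y"
    using assms unfolding fx_def by simp
  ultimately have fx: "fx a p q x y = 0 \<longleftrightarrow> (1 - x) * (x - p) = a * y * (1 + q * y)"
    by (simp add: field_simps)
  have fy: "fy b c x y = 0 \<longleftrightarrow> y = 1 - c * x"
    using assms unfolding fy_def by auto
  have "(1 - x) * (x - p) - a * (1 - c * x) * (1 + q * (1 - c * x)) = - equilibrium_quadratic a c p q x"
    unfolding A1_def A2_def A3_def by (simp add: algebra_simps power2_eq_square)
  then show ?thesis
    unfolding fx fy by auto
qed

lemma pos_equilibria_eq_image: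
  assumes "a > 0" "b > 0" "c > 0" "q > 0"
  shows "pos_equilibria a b c p q =
           (\<lambda>x. (x, 1 - c * x)) ` {x. 0 < x \<and> x < 1 / c \<and> equilibrium_quadratic a c p q x = 0}"
proof -
  have "(x, y) \<in> pos_equilibria a b c p q \<longleftrightarrow>
          y = 1 - c * x \<and> 0 < x \<and> x < 1 / c \<and> equilibrium_quadratic a c p q x = 0" for x y
  proof -
    have "0 < 1 - c * x \<longleftrightarrow> x < 1 / c"
      using assms(3) by (simp add: field_simps)
    then show ?thesis
      using equilibrium_iff[OF assms(1,2,4), where x = x and y = y and p = p and c = c]
      unfolding pos_equilibria_def by auto
  qed
  then show ?thesis
    by (auto simp: image_iff)
qed

lemma x1_less_x2: "a > 0 \<Longrightarrow> q > 0 \<Longrightarrow> Delta a c p q > 0 \<Longrightarrow> x1 a c p q < x2 a c p q"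
  unfolding x1_eq_lower_root x2_eq_upper_root Delta_def
  by (rule lower_root_less_upper_root[OF A1_pos])

context
  fixes a c p q :: real
  assumes a_pos: "a > 0" and c_pos: "c > 0" and q_pos: "q > 0" and p_pos: "p > 0"
    and Delta_nonneg: "Delta a c p q \<ge> 0"
begin

lemma discriminant_nonneg: "(A2 a c p q)\<^sup>2 - 4 * A1 a c q * A3 a p q \<ge> 0"
  using Delta_nonneg unfolding Delta_def .

lemma equilibrium_quadratic_eq_0_iff:
  "equilibrium_quadratic a c p q x = 0 \<longleftrightarrow> x = x1 a c p q \<or> x = x2 a c p q"
  unfolding x1_eq_lower_root x2_eq_upper_root
  using quadratic_eq_0_iff[OF A1_pos[OF a_pos q_pos] discriminant_nonneg] .

lemma x1_le_x2: "x1 a c p q \<le> x2 a c p q"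
  unfolding x1_eq_lower_root x2_eq_upper_root
  using lower_root_le_upper_root[OF A1_pos[OF a_pos q_pos] discriminant_nonneg] .

lemma x1_pos: "x1 a c p q > 0"
  unfolding x1_eq_lower_root
  using lower_root_pos[OF A1_pos[OF a_pos q_pos] discriminant_nonneg A2_neg[OF a_pos c_pos q_pos p_pos]
      A3_pos[OF a_pos q_pos p_pos]] .

lemma inverse_c_between_roots:
  assumes "c > 1" "p < 1 / c"
  shows "x1 a c p q < 1 / c" "1 / c < x2 a c p q"
proof -
  have "1 / c < 1"
    using assms(1) by simp
  then have "equilibrium_quadratic a c p q (1 / c) < 0"
    using assms(2) equilibrium_quadratic_at_inverse_c[of c a q p] c_pos
    by (simp add: mult_less_0_iff)
  from roots_around_neg_value[OF A1_pos[OF a_pos q_pos] discriminant_nonneg this]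
  show "x1 a c p q < 1 / c" "1 / c < x2 a c p q"
    unfolding x1_eq_lower_root x2_eq_upper_root .
qed

lemma x2_le_inverse_c:
  assumes "c \<le> 1" "p \<le> 1" "2 * A1 a c q + A2 a c p q > 0"
  shows "x2 a c p q \<le> 1 / c"
proof -
  have A1: "A1 a c q > 0"
    using A1_pos[OF a_pos q_pos] .
  have "1 \<le> 1 / c"
    using assms(1) c_pos by simp
  then have "(1 / c - 1) * (1 / c - p) \<ge> 0"
    using assms(2) by (intro mult_nonneg_nonneg) auto
  then have "equilibrium_quadratic a c p q (1 / c) \<ge> 0"
    using equilibrium_quadratic_at_inverse_c[of c a q p] c_pos by simp
  moreover have "- A2 a c p q / (2 * A1 a c q) < 1"
    using assms(3) A1 by (simp add: field_simps)
  then have "- A2 a c p q / (2 * A1 a c q) \<le> 1 / c"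
    using \<open>1 \<le> 1 / c\<close> by linarith
  ultimately show ?thesis
    unfolding x2_eq_upper_root by (rule upper_root_le_right_of_vertex[OF A1 discriminant_nonneg])
qed

lemma x2_less_inverse_c:
  assumes "c < 1" "p < 1" "2 * A1 a c q + A2 a c p q > 0"
  shows "x2 a c p q < 1 / c"
proof -
  have "1 < 1 / c"
    using assms(1) c_pos by simp
  then have "(1 / c - 1) * (1 / c - p) > 0"
    using assms(2) by (intro mult_pos_pos) auto
  moreover have "equilibrium_quadratic a c p q (1 / c) = (1 / c - 1) * (1 / c - p)"
    using c_pos by (intro equilibrium_quadratic_at_inverse_c) simp
  ultimately have "equilibrium_quadratic a c p q (1 / c) \<noteq> 0"
    by linarith
  moreover have "equilibrium_quadratic a c p q (x2 a c p q) = 0"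
    using equilibrium_quadratic_eq_0_iff[of "x2 a c p q"] by blast
  ultimately have "x2 a c p q \<noteq> 1 / c"
    by metis
  moreover have "x2 a c p q \<le> 1 / c"
    using x2_le_inverse_c[OF less_imp_le[OF assms(1)] less_imp_le[OF assms(2)] assms(3)] .
  ultimately show ?thesis
    by simp
qed

end

lemma pos_equilibria_eq_roots:
  assumes "a > 0" "b > 0" "c > 0" "q > 0" "p > 0" "Delta a c p q \<ge> 0"
  shows "pos_equilibria a b c p q =
           (\<lambda>x. (x, 1 - c * x)) ` ({x1 a c p q, x2 a c p q} \<inter> {..<1 / c})"
proof -
  have "0 < x1 a c p q" "0 < x2 a c p q"
    using x1_pos[OF assms(1,3,4,5,6)] x1_le_x2[OF assms(1,3,4,5,6)] by linarith+
  then have "{x. 0 < x \<and> x < 1 / c \<and> equilibrium_quadratic a c p q x = 0} =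
               {x1 a c p q, x2 a c p q} \<inter> {..<1 / c}"
    using equilibrium_quadratic_eq_0_iff[OF assms(1,3,4,5,6)] by auto
  then show ?thesis
    using pos_equilibria_eq_image[OF assms(1-4)] by simp
qed

lemma pos_equilibria_eq_E1:
  assumes "a > 0" "b > 0" "c > 0" "q > 0" "p > 0" "Delta a c p q \<ge> 0"
    and "x1 a c p q < 1 / c" "1 / c \<le> x2 a c p q"
  shows "pos_equilibria a b c p q = {E1 a c p q}"
proof -
  have "{x1 a c p q, x2 a c p q} \<inter> {..<1 / c} = {x1 a c p q}"
    using assms(7,8) by auto
  then show ?thesis
    unfolding pos_equilibria_eq_roots[OF assms(1-6)] E1_def by simp
qed

lemma pos_equilibria_eq_E1_E2:
  assumes "a > 0" "b > 0" "c > 0" "q > 0" "p > 0" "Delta a c p q \<ge> 0"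
    and "x2 a c p q < 1 / c"
  shows "pos_equilibria a b c p q = {E1 a c p q, E2 a c p q}"
proof -
  have "{x1 a c p q, x2 a c p q} \<inter> {..<1 / c} = {x1 a c p q, x2 a c p q}"
    using assms(7) x1_le_x2[OF assms(1,3,4,5,6)] by auto
  then show ?thesis
    unfolding pos_equilibria_eq_roots[OF assms(1-6)] E1_def E2_def by simp
qed

lemma x2_eq_1:
  assumes "a > 0" "q > 0" "p > 0" "p \<le> 1"
    and "2 * A1 a 1 q + A2 a 1 p q > 0" "Delta a 1 p q > 0"
  shows "x2 a 1 p q = 1"
proof -
  have D: "Delta a 1 p q \<ge> 0"
    using assms(6) by simp
  have "equilibrium_quadratic a 1 p q 1 = 0"
    using equilibrium_quadratic_at_inverse_c[of 1 a q p] by simp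
  then have "1 = x1 a 1 p q \<or> 1 = x2 a 1 p q"
    using equilibrium_quadratic_eq_0_iff[OF assms(1) _ assms(2,3) D, of 1] by simp
  moreover have "x2 a 1 p q \<le> 1"
    using x2_le_inverse_c[OF assms(1) _ assms(2,3) D _ assms(4,5)] by simp
  ultimately show ?thesis
    using x1_less_x2[OF assms(1,2,6)] by linarith
qed

lemma pos_equilibria_c_gt_1:
  assumes "a > 0" "b > 0" "q > 0" "p > 0" "Delta a c p q > 0" "c > 1" "p < 1 / c"
  shows "pos_equilibria a b c p q = {E1 a c p q}"
proof -
  have c: "c > 0" and D: "Delta a c p q \<ge> 0"
    using assms(5,6) by simp_all
  note between = inverse_c_between_roots[OF assms(1) c assms(3,4) D assms(6,7)]
  show ?thesis
    using pos_equilibria_eq_E1[OF assms(1,2) c assms(3,4) D between(1) less_imp_le[OF between(2)]] .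
qed

lemma pos_equilibria_c_lt_1:
  assumes "a > 0" "b > 0" "c > 0" "q > 0" "p > 0" "p < 1" "Delta a c p q > 0"
    and "2 * A1 a c q + A2 a c p q > 0" "c < 1"
  shows "E1 a c p q \<noteq> E2 a c p q" "pos_equilibria a b c p q = {E1 a c p q, E2 a c p q}"
proof -
  have D: "Delta a c p q \<ge> 0"
    using assms(7) by simp
  show "E1 a c p q \<noteq> E2 a c p q"
    using x1_less_x2[OF assms(1,4,7)] unfolding E1_def E2_def by simp
  show "pos_equilibria a b c p q = {E1 a c p q, E2 a c p q}"
    using pos_equilibria_eq_E1_E2[OF assms(1-5) D]
      x2_less_inverse_c[OF assms(1,3,4,5) D assms(9,6,8)] by simp
qed

lemma pos_equilibria_c_eq_1:
  assumes "a > 0" "b > 0" "q > 0" "p > 0" "p < 1" "Delta a 1 p q > 0"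
    and "2 * A1 a 1 q + A2 a 1 p q > 0"
  shows "pos_equilibria a b 1 p q = {E1 a 1 p q}"
proof -
  have D: "Delta a 1 p q \<ge> 0"
    using assms(6) by simp
  have "x2 a 1 p q = 1"
    using x2_eq_1[OF assms(1,3,4) less_imp_le[OF assms(5)] assms(7,6)] .
  then show ?thesis
    using pos_equilibria_eq_E1[OF assms(1,2) _ assms(3,4) D] x1_less_x2[OF assms(1,3,6)] by simp
qed

lemma pos_equilibria_double_root:
  assumes "a > 0" "b > 0" "c > 0" "q > 0" "p > 0" "p < 1" "Delta a c p q = 0"
    and "2 * A1 a c q + A2 a c p q > 0" "c < 1"
  shows "pos_equilibria a b c p q = {E3 a c p q}"
proof -
  have D: "Delta a c p q \<ge> 0"
    using assms(7) by simp
  have "E3 a c p q = E1 a c p q" "E2 a c p q = E1 a c p q"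
    unfolding E1_def E2_def E3_def x3_eq_x1[OF assms(7)] x2_eq_x1[OF assms(7)] by simp_all
  then show ?thesis
    using pos_equilibria_eq_E1_E2[OF assms(1-5) D]
      x2_less_inverse_c[OF assms(1,3,4,5) D assms(9,6,8)] by simp
qed

theorem theorem3p1:
  fixes a b c p q :: real
  assumes "a > 0" and "b > 0" and "c > 0" and "q > 0" and "0 < p" and "p < 1"
  shows
    "(Delta a c p q > 0 \<longrightarrow>
       ((2 * A1 a c q + A2 a c p q > 0 \<longrightarrow>
           (c < 1 \<longrightarrow> E1 a c p q \<noteq> E2 a c p q \<and>
                      pos_equilibria a b c p q = {E1 a c p q, E2 a c p q}) \<and>
           (c = 1 \<longrightarrow> pos_equilibria a b c p q = {E1 a c p q}) \<and>
           (1 < c \<and> c \<le> 1 / q + 1 \<and> p < 1 / c \<longrightarrow>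
              pos_equilibria a b c p q = {E1 a c p q})) \<and>
        (2 * A1 a c q + A2 a c p q < 0 \<and> 1 < c \<and> c < 1 / q + 1 \<and> p < 1 / c \<longrightarrow>
              pos_equilibria a b c p q = {E1 a c p q}) \<and>
        (2 * A1 a c q + A2 a c p q = 0 \<and> c > 1 \<and> p < 1 / c \<longrightarrow>
              pos_equilibria a b c p q = {E1 a c p q}))) \<and>
     (Delta a c p q = 0 \<and> 2 * A1 a c q + A2 a c p q > 0 \<and> c < 1 \<longrightarrow>
              pos_equilibria a b c p q = {E3 a c p q})"
proof -
  note c_lt_1 = pos_equilibria_c_lt_1[OF assms]
  note c_eq_1 = pos_equilibria_c_eq_1[OF assms(1,2,4,5,6)]
  note c_gt_1 = pos_equilibria_c_gt_1[OF assms(1,2,4,5)]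
  note double_root = pos_equilibria_double_root[OF assms]
  show ?thesis
    using c_lt_1 c_eq_1 c_gt_1 double_root by blast
qed

end
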